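(* For every positive integer $n$, with $M_m=2(m+1)H_m-4m$ for $m\ge 0$, $$\sum_{j=1}^{n}M_{j-1}M_{n-j}=4\sum_{j=1}^{n}jH_{j-1}(n-j+1)H_{n-j}-\frac{8}{3}n(n^2-1)H_{n+1}+\frac{44n}{9}(n^2-1).$$
   Context: $H_m=\sum_{k=1}^m 1/k$ denotes the $m$th harmonic number, with $H_0=0$. *)

theory Defs
  imports "HOL-Analysis.Analysis"
begin

definition M :: "nat \<Rightarrow> real" where
  "M m = 2 * (real m + 1) * harm m - 4 * real m"

end

theory Submission
  imports Defs
begin

text \<open>
  Expanding M(j-1) M(n-j) bilinearly produces the product sum of the statement, two cross
  sums and the polynomial sum of (j-1)(n-j). The reflection j \<mapsto> n+1-j turns one cross
  sum into the other, B = sum of j(n-j)H(j-1). Its closed form follows by induction on n: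
  raising n by one adds the sum of jH(j-1) to B, and that sum is again evaluated by induction.
\<close>

lemma harm_Suc_real: "(harm (Suc n) :: real) = harm n + 1 / (real n + 1)"
  by (simp add: harm_Suc inverse_eq_divide)

lemma sum_mult_harm_pred: "(\<Sum>j=1..n. real j * harm (j - 1) :: real) =
     real n * (real n + 1) / 2 * harm n - real n * (real n + 3) / 4"
proof (induction n)
  case 0
  then show ?case by simp
next
  case (Suc n)
  have "(\<Sum>j=1..Suc n. real j * harm (j - 1) :: real) =
      (\<Sum>j=1..n. real j * harm (j - 1)) + (real n + 1) * harm n"
    by simp
  also have "\<dots> = real n * (real n + 1) / 2 * harm n - real n * (real n + 3) / 4
      + (real n + 1) * harm n"
    by (simp only: Suc)
  also have "\<dots> = real (Suc n) * (real (Suc n) + 1) / 2 * harm (Suc n)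
      - real (Suc n) * (real (Suc n) + 3) / 4"
    by (simp add: harm_Suc_real field_simps)
  finally show ?case .
qed

lemma sum_mult_diff_harm_pred:
  "(\<Sum>j=1..n. real j * real (n - j) * harm (j - 1) :: real) =
     real n * ((real n)^2 - 1) / 6 * harm n - 11 * real n * ((real n)^2 - 1) / 36
     + real n * (real n - 1)^2 / 6"
proof (induction n)
  case 0
  then show ?case by simp
next
  case (Suc n)
  \<comment> \<open>the summand for j = n + 1 vanishes, and n + 1 - j = (n - j) + 1 below it\<close>
  have "(\<Sum>j=1..Suc n. real j * real (Suc n - j) * harm (j - 1) :: real) =
      (\<Sum>j=1..n. real j * real (n - j) * harm (j - 1) + real j * harm (j - 1))"
    by (simp, rule sum.cong) (auto simp: Suc_diff_le algebra_simps)
  also have "\<dots> = (\<Sum>j=1..n. real j * real (n - j) * harm (j - 1))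
      + (\<Sum>j=1..n. real j * harm (j - 1))"
    by (rule sum.distrib)
  also have "\<dots> = real n * ((real n)^2 - 1) / 6 * harm n - 11 * real n * ((real n)^2 - 1) / 36
     + real n * (real n - 1)^2 / 6
     + (real n * (real n + 1) / 2 * harm n - real n * (real n + 3) / 4)"
    by (simp only: Suc sum_mult_harm_pred)
  also have "\<dots> = real (Suc n) * ((real (Suc n))^2 - 1) / 6 * harm (Suc n)
      - 11 * real (Suc n) * ((real (Suc n))^2 - 1) / 36 + real (Suc n) * (real (Suc n) - 1)^2 / 6"
    by (simp add: harm_Suc_real field_simps power2_eq_square)
  finally show ?case .
qed

lemma sum_of_nat_pred: "(\<Sum>j=1..n. real (j - 1)) = real n * (real n - 1) / 2"
  by (induction n) (simp_all add: field_simps)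

lemma sum_pred_mult_diff:
  "(\<Sum>j=1..n. real (j - 1) * real (n - j)) = real n * (real n - 1) * (real n - 2) / 6"
proof (induction n)
  case 0
  then show ?case by simp
next
  case (Suc n)
  have "(\<Sum>j=1..Suc n. real (j - 1) * real (Suc n - j)) =
      (\<Sum>j=1..n. real (j - 1) * real (n - j) + real (j - 1))"
    by (simp, rule sum.cong) (auto simp: Suc_diff_le algebra_simps)
  also have "\<dots> = real n * (real n - 1) * (real n - 2) / 6 + real n * (real n - 1) / 2"
    by (simp only: sum.distrib Suc sum_of_nat_pred)
  also have "\<dots> = real (Suc n) * (real (Suc n) - 1) * (real (Suc n) - 2) / 6"
    by (simp add: field_simps)
  finally show ?case .
qed

lemma cubic_mult_harm_Suc:
  "c * real n * ((real n)^2 - 1) * harm (n + 1) =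
     c * real n * ((real n)^2 - 1) * harm n + c * real n * (real n - 1)"
proof -
  have "c * real n * ((real n)^2 - 1) * (1 / (real n + 1)) = c * real n * (real n - 1)"
    by (simp add: field_simps power2_eq_square)
  then show ?thesis
    by (simp add: harm_Suc_real distrib_left)
qed

lemma sum_reflect_pred_diff:
  fixes f :: "nat \<Rightarrow> nat \<Rightarrow> 'a::comm_monoid_add"
  shows "(\<Sum>j=1..n. f (j - 1) (n - j)) = (\<Sum>j=1..n. f (n - j) (j - 1))"
  by (rule sum.reindex_bij_witness[where i="\<lambda>j. n + 1 - j" and j="\<lambda>j. n + 1 - j"]) auto

lemma M_mult_M:
  "M a * M b = 4 * ((real a + 1) * harm a * (real b + 1) * harm b)
     - 8 * ((real a + 1) * real b * harm a) - 8 * (real a * (real b + 1) * harm b)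
     + 16 * (real a * real b)"
  by (simp add: M_def algebra_simps)

theorem lemma3p2:
  fixes n :: nat
  assumes "n \<ge> 1"
  shows "(\<Sum>j=1..n. M (j - 1) * M (n - j)) =
    4 * (\<Sum>j=1..n. real j * harm (j - 1) * (real (n - j) + 1) * harm (n - j))
    - 8 / 3 * real n * ((real n)^2 - 1) * harm (n + 1)
    + 44 * real n / 9 * ((real n)^2 - 1)"
proof -
  \<comment> \<open>the identity holds for \<open>n = 0\<close> as well\<close>
  define S where "S = (\<Sum>j=1..n. real j * harm (j - 1) * (real (n - j) + 1) * harm (n - j))"
  define B where "B = (\<Sum>j=1..n. real j * real (n - j) * harm (j - 1) :: real)"
  have symmetric_terms:
    "(\<Sum>j=1..n. real (j - 1) * (real (n - j) + 1) * harm (n - j)) = B"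
    unfolding B_def
    by (subst sum_reflect_pred_diff, rule sum.cong) (auto simp: of_nat_diff algebra_simps)
  have "(\<Sum>j=1..n. M (j - 1) * M (n - j)) =
      4 * S - 8 * B - 8 * (\<Sum>j=1..n. real (j - 1) * (real (n - j) + 1) * harm (n - j))
      + 16 * (\<Sum>j=1..n. real (j - 1) * real (n - j))"
    unfolding M_mult_M S_def B_def
    by (simp add: sum.distrib sum_subtractf sum_distrib_left sum_distrib_right of_nat_diff algebra_simps)
  also have "\<dots> = 4 * S - 16 * B + 16 * (real n * (real n - 1) * (real n - 2) / 6)"
    unfolding symmetric_terms sum_pred_mult_diff by simp
  also have "\<dots> = 4 * S - 8 / 3 * real n * ((real n)^2 - 1) * harm (n + 1)
      + 44 * real n / 9 * ((real n)^2 - 1)"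
    unfolding B_def sum_mult_diff_harm_pred cubic_mult_harm_Suc
    by (simp add: field_simps power2_eq_square)
  finally show ?thesis
    unfolding S_def .
qed

end
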